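(* The sequence $(M_n)_{n\ge2}$ defined by $$M_n=\frac{2}{n-1}Z_n-4\bigl(\Psi(n)+\gamma\bigr)$$ is a martingale with respect to the filtration $(\mathbb{F}_n)_{n\ge2}$, where $\Psi$ is the digamma function and $\gamma$ Euler's constant.
   Context: Consider the random sequence of trees $(T_n)_{n\ge1}$ with node labels $1,\dots,n$ defined as follows: $T_1$ is a single node labeled $1$; $T_2$ consists of nodes $1,2$ joined by an edge; for $n\ge3$, $T_n$ is obtained from $T_{n-1}$ by adding a node labeled $n$ and an edge joining it to a node $i\in\{1,\dots,n-1\}$ chosen, conditionally on $T_1,\dots,T_{n-1}$, with probability $D_{n-1,i}/(2(n-2))$, where $D_{m,i}$ is the degree of node $i$ in $T_m$. The Zagreb index of $T_n$ is $Z_n=\sum_{j=1}^n D_{n,j}^2$. $\mathbb{F}_n$ is the $\sigma$-field generated by $T_1,\dots,T_n$. *)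

theory Defs
  imports "HOL-Probability.Probability"
begin

text \<open>The tree T_n is encoded by its edge set; node j (2 <= j <= n) is joined to its
  parent p j. The vertex set of T_n is always {1..n}.\<close>
definition tree_edges :: "(nat \<Rightarrow> nat) \<Rightarrow> nat \<Rightarrow> nat set set" where
  "tree_edges p n = {{p j, j} | j. 2 \<le> j \<and> j \<le> n}"

definition deg :: "nat set set \<Rightarrow> nat \<Rightarrow> nat" where
  "deg E i = card {e \<in> E. i \<in> e}"

definition zagreb :: "nat \<Rightarrow> nat set set \<Rightarrow> nat" where
  "zagreb n E = (\<Sum>j = 1..n. (deg E j)\<^sup>2)"

definition tree_filtration :: "'a measure \<Rightarrow> ('a \<Rightarrow> nat \<Rightarrow> nat) \<Rightarrow> nat \<Rightarrow> 'a measure" where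
  "tree_filtration M X n =
     sigma (space M) {{\<omega> \<in> space M. tree_edges (X \<omega>) k \<in> A} | k A. 1 \<le> k \<and> k \<le> n}"

definition martingale_from ::
  "nat \<Rightarrow> 'a measure \<Rightarrow> (nat \<Rightarrow> 'a measure) \<Rightarrow> (nat \<Rightarrow> 'a \<Rightarrow> real) \<Rightarrow> bool" where
  "martingale_from n0 M F Y \<longleftrightarrow>
     (\<forall>n\<ge>n0. subalgebra M (F n)) \<and>
     (\<forall>n m. n0 \<le> n \<and> n \<le> m \<longrightarrow> sets (F n) \<subseteq> sets (F m)) \<and>
     (\<forall>n\<ge>n0. Y n \<in> borel_measurable (F n) \<and> integrable M (Y n)) \<and>
     (\<forall>n\<ge>n0. AE \<omega> in M. real_cond_exp M (F n) (Y (Suc n)) \<omega> = Y n \<omega>)"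

end

(*
  Attaching node n + 1 to a node of degree d raises the Zagreb index by (d + 1)^2 - d^2 + 1 = 2 d + 2.
  Given F_n the parent is node i with probability d_i / (2 (n - 1)), and the degrees sum to 2 (n - 1),
  so E[Z_(n+1) | F_n] = Z_n + (\<Sum>i. d_i^2) / (n - 1) + 2 = n / (n - 1) Z_n + 2.
  Scaling by 2 / n and Digamma (n + 1) = Digamma n + 1 / n turn this into M_n.
*)

theory Submission
  imports Defs
begin

definition recursive_tree :: "(nat \<Rightarrow> nat) \<Rightarrow> nat \<Rightarrow> bool" where
  "recursive_tree p n \<longleftrightarrow> (\<forall>j\<in>{2..n}. 1 \<le> p j \<and> p j < j)"

lemma recursive_tree_SucD: "recursive_tree p (Suc n) \<Longrightarrow> recursive_tree p n"
  unfolding recursive_tree_def by auto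

lemma recursive_treeD: "recursive_tree p n \<Longrightarrow> j \<in> {2..n} \<Longrightarrow> p j \<in> {1..<j}"
  unfolding recursive_tree_def by auto

lemma recursive_tree_SucI: "recursive_tree p n \<Longrightarrow> p (Suc n) \<in> {1..n} \<Longrightarrow> recursive_tree p (Suc n)"
  unfolding recursive_tree_def by (auto simp: le_Suc_eq)

lemma recursive_tree_parent_Suc: "recursive_tree p (Suc n) \<Longrightarrow> 1 \<le> n \<Longrightarrow> p (Suc n) \<in> {1..n}"
  unfolding recursive_tree_def by (auto dest: bspec[of _ _ "Suc n"])

lemma tree_edges_eq_image: "tree_edges p n = (\<lambda>j. {p j, j}) ` {2..n}"
  unfolding tree_edges_def by auto

lemma tree_edges_eq_empty: "n \<le> 1 \<Longrightarrow> tree_edges p n = {}"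
  unfolding tree_edges_eq_image by auto

lemma tree_edges_Suc:
  "1 \<le> n \<Longrightarrow> tree_edges p (Suc n) = insert {p (Suc n), Suc n} (tree_edges p n)"
  unfolding tree_edges_eq_image by (auto simp: atLeastAtMostSuc_conv)

lemma finite_tree_edges [simp]: "finite (tree_edges p n)"
  unfolding tree_edges_eq_image by simp

lemma deg_tree_edges_le: "deg (tree_edges p n) i \<le> n"
proof -
  have "deg (tree_edges p n) i \<le> card (tree_edges p n)"
    unfolding deg_def by (rule card_mono) auto
  also have "\<dots> \<le> n"
    unfolding tree_edges_eq_image using card_image_le[of "{2..n}" "\<lambda>j. {p j, j}"] by simp
  finally show ?thesis .
qed

lemma deg_insert:
  assumes "finite E" "e \<notin> E"
  shows "deg (insert e E) i = deg E i + (if i \<in> e then 1 else 0)"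
proof -
  have "{x \<in> insert e E. i \<in> x} = (if i \<in> e then insert e {x \<in> E. i \<in> x} else {x \<in> E. i \<in> x})"
    by auto
  then show ?thesis unfolding deg_def using assms by simp
qed

lemma Suc_notin_tree_edges:
  assumes "recursive_tree p n" "e \<in> tree_edges p n"
  shows "Suc n \<notin> e"
  using assms recursive_treeD[OF assms(1)] unfolding tree_edges_def by fastforce

lemma deg_tree_edges_Suc_self: "recursive_tree p n \<Longrightarrow> deg (tree_edges p n) (Suc n) = 0"
  unfolding deg_def using Suc_notin_tree_edges[of p n] by auto

lemma deg_tree_edges_Suc:
  assumes "recursive_tree p (Suc n)" "1 \<le> n"
  shows "deg (tree_edges p (Suc n)) i
           = deg (tree_edges p n) i + (if i = p (Suc n) \<or> i = Suc n then 1 else 0)"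
proof -
  have "{p (Suc n), Suc n} \<notin> tree_edges p n"
    using Suc_notin_tree_edges[OF recursive_tree_SucD[OF assms(1)]] by blast
  then show ?thesis
    using deg_insert[of "tree_edges p n" "{p (Suc n), Suc n}" i]
    unfolding tree_edges_Suc[OF assms(2)] by simp
qed

lemma sum_deg_tree_edges:
  assumes "recursive_tree p n" "1 \<le> n"
  shows "(\<Sum>i=1..n. deg (tree_edges p n) i) = 2 * (n - 1)"
  using assms(2,1)
proof (induction n rule: nat_induct_at_least)
  case base
  then show ?case by (simp add: tree_edges_eq_empty deg_def)
next
  case (Suc n)
  have tree: "recursive_tree p n" using Suc.prems by (rule recursive_tree_SucD)
  have parent: "p (Suc n) \<in> {1..n}" using recursive_tree_parent_Suc Suc by simp
  have "(\<Sum>i=1..Suc n. deg (tree_edges p (Suc n)) i)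
      = (\<Sum>i=1..Suc n. deg (tree_edges p n) i)
        + (\<Sum>i=1..Suc n. if i = p (Suc n) \<or> i = Suc n then 1 else 0)"
    by (simp add: deg_tree_edges_Suc[OF Suc.prems Suc.hyps] sum.distrib)
  also have "\<dots> = 2 * (n - 1) + 2"
    using Suc.IH[OF tree] deg_tree_edges_Suc_self[OF tree] parent
    by (simp add: sum.If_cases Int_def conj_disj_distribL Collect_disj_eq)
  finally show ?case using Suc.hyps by simp
qed

lemma zagreb_tree_edges_Suc:
  assumes "recursive_tree p (Suc n)" "1 \<le> n"
  shows "zagreb (Suc n) (tree_edges p (Suc n))
           = zagreb n (tree_edges p n) + 2 * deg (tree_edges p n) (p (Suc n)) + 2"
proof -
  let ?d = "deg (tree_edges p n)" and ?q = "p (Suc n)"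
  have parent: "?q \<in> {1..n}" using recursive_tree_parent_Suc assms by simp
  have "zagreb (Suc n) (tree_edges p (Suc n))
      = (\<Sum>j=1..n. (?d j + (if j = ?q then 1 else 0))\<^sup>2) + 1"
    unfolding zagreb_def using deg_tree_edges_Suc[OF assms]
      deg_tree_edges_Suc_self[OF recursive_tree_SucD[OF assms(1)]] parent by simp
  also have "\<dots> = (\<Sum>j=1..n. (?d j)\<^sup>2 + (if j = ?q then 2 * ?d j + 1 else 0)) + 1"
    by (auto simp: power2_eq_square intro: sum.cong)
  also have "\<dots> = zagreb n (tree_edges p n) + 2 * ?d ?q + 2"
    using parent by (simp add: sum.distrib zagreb_def)
  finally show ?thesis .
qed

lemma zagreb_tree_edges_le: "zagreb n (tree_edges p n) \<le> n ^ 3"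
proof -
  have "zagreb n (tree_edges p n) \<le> (\<Sum>j=1..n. n\<^sup>2)"
    unfolding zagreb_def by (rule sum_mono) (simp add: deg_tree_edges_le power_mono)
  then show ?thesis by (simp add: power_def)
qed

lemma (in prob_space) AE_mem_if_sum_cond_prob_eq_1:
  assumes "subalgebra M F" "finite I"
    and [measurable]: "J \<in> measurable M (count_space UNIV)"
    and sum_eq_1: "AE \<omega> in M. (\<Sum>i\<in>I. real_cond_exp M F (indicator {\<omega> \<in> space M. J \<omega> = i}) \<omega>) = 1"
  shows "AE \<omega> in M. J \<omega> \<in> I"
proof -
  interpret finite_measure_subalgebra M F by unfold_locales fact
  define A where "A i = {\<omega> \<in> space M. J \<omega> = i}" for i
  have A_sets [measurable]: "A i \<in> sets M" for i unfolding A_def by measurable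
  have integrable_A: "integrable M (indicator (A i) :: 'a \<Rightarrow> real)" for i
    by (rule integrable_const_bound[where B=1]) (auto simp: indicator_def)
  have "prob {\<omega> \<in> space M. J \<omega> \<in> I} = prob (\<Union>i\<in>I. A i)"
    unfolding A_def by (rule arg_cong[where f=prob]) auto
  also have "\<dots> = (\<Sum>i\<in>I. \<integral>\<omega>. indicator (A i) \<omega> \<partial>M)"
    using \<open>finite I\<close> by (subst finite_measure_finite_Union) (auto simp: disjoint_family_on_def A_def)
  also have "\<dots> = (\<Sum>i\<in>I. \<integral>\<omega>. real_cond_exp M F (indicator (A i)) \<omega> \<partial>M)"
    using real_cond_exp_int(2)[OF integrable_A] by simp
  also have "\<dots> = (\<integral>\<omega>. (\<Sum>i\<in>I. real_cond_exp M F (indicator (A i)) \<omega>) \<partial>M)"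
    using real_cond_exp_int(1)[OF integrable_A] by (simp add: Bochner_Integration.integral_sum)
  also have "\<dots> = (\<integral>\<omega>. 1 \<partial>M)"
    by (rule integral_cong_AE) (use sum_eq_1 in \<open>auto simp: A_def\<close>)
  also have "\<dots> = 1"
    by (simp add: prob_space)
  moreover have "{\<omega> \<in> space M. J \<omega> \<in> I} \<in> events"
    using measurable_sets[OF assms(3), of I] by (simp add: vimage_def Int_def conj_commute)
  ultimately show ?thesis by (simp add: prob_Collect_eq_1)
qed

lemma (in finite_measure_subalgebra) real_cond_exp_discrete_index:
  fixes h :: "'b::countable \<Rightarrow> 'a \<Rightarrow> real"
  assumes "finite I" and J_in: "AE \<omega> in M. J \<omega> \<in> I"
    and [measurable]: "J \<in> measurable M (count_space UNIV)"
    and h_F: "\<And>i. h i \<in> borel_measurable F" and h_bound: "\<And>i \<omega>. \<bar>h i \<omega>\<bar> \<le> B"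
  shows "AE \<omega> in M. real_cond_exp M F (\<lambda>\<omega>. h (J \<omega>) \<omega>) \<omega>
           = (\<Sum>i\<in>I. h i \<omega> * real_cond_exp M F (indicator {\<omega> \<in> space M. J \<omega> = i}) \<omega>)"
proof -
  define ind :: "'b \<Rightarrow> 'a \<Rightarrow> real" where "ind i = indicator {\<omega> \<in> space M. J \<omega> = i}" for i
  have [measurable]: "h i \<in> borel_measurable M" for i by (rule measurable_from_subalg[OF subalg h_F])
  have [measurable]: "ind i \<in> borel_measurable M" for i unfolding ind_def by measurable
  have [measurable]: "(\<lambda>\<omega>. h (J \<omega>) \<omega>) \<in> borel_measurable M"
    by (rule measurable_compose_countable'[where I=UNIV]) auto
  have integrable: "integrable M (\<lambda>\<omega>. h i \<omega> * ind i \<omega>)" for i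
    by (rule integrable_const_bound[where B=B])
       (auto simp: ind_def indicator_def intro: order_trans[OF _ h_bound])
  have "AE \<omega> in M. h (J \<omega>) \<omega> = (\<Sum>i\<in>I. h i \<omega> * ind i \<omega>)"
    using J_in AE_space by eventually_elim (simp add: ind_def indicator_def eq_commute[of "J _"] \<open>finite I\<close>)
  then have "AE \<omega> in M. real_cond_exp M F (\<lambda>\<omega>. h (J \<omega>) \<omega>) \<omega>
      = real_cond_exp M F (\<lambda>\<omega>. \<Sum>i\<in>I. h i \<omega> * ind i \<omega>) \<omega>"
    by (rule real_cond_exp_cong) auto
  moreover have "AE \<omega> in M. real_cond_exp M F (\<lambda>\<omega>. \<Sum>i\<in>I. h i \<omega> * ind i \<omega>) \<omega>
      = (\<Sum>i\<in>I. real_cond_exp M F (\<lambda>\<omega>. h i \<omega> * ind i \<omega>) \<omega>)"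
    using integrable by (rule real_cond_exp_sum)
  moreover have "AE \<omega> in M. \<forall>i\<in>I. real_cond_exp M F (\<lambda>\<omega>. h i \<omega> * ind i \<omega>) \<omega>
      = h i \<omega> * real_cond_exp M F (ind i) \<omega>"
    using \<open>finite I\<close> h_F integrable by (intro AE_finite_allI real_cond_exp_mult) auto
  ultimately show ?thesis unfolding ind_def by eventually_elim simp
qed

lemma (in finite_measure_subalgebra) real_cond_exp_affine:
  assumes "integrable M f"
  shows "AE \<omega> in M. real_cond_exp M F (\<lambda>\<omega>. a * f \<omega> - c) \<omega> = a * real_cond_exp M F f \<omega> - c"
proof -
  have "AE \<omega> in M. real_cond_exp M F (\<lambda>_. c) \<omega> = c"
    by (rule real_cond_exp_F_meas) auto
  moreover have "AE \<omega> in M. real_cond_exp M F (\<lambda>\<omega>. a * f \<omega> - c) \<omega>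
      = real_cond_exp M F (\<lambda>\<omega>. a * f \<omega>) \<omega> - real_cond_exp M F (\<lambda>_. c) \<omega>"
    using assms by (intro real_cond_exp_diff) auto
  moreover have "AE \<omega> in M. real_cond_exp M F (\<lambda>\<omega>. a * f \<omega>) \<omega> = a * real_cond_exp M F f \<omega>"
    using assms by (rule real_cond_exp_cmult)
  ultimately show ?thesis by eventually_elim simp
qed

locale plane_oriented_recursive_tree = prob_space M for M :: "'a measure" +
  fixes X :: "'a \<Rightarrow> nat \<Rightarrow> nat"
  assumes measurable_parent [measurable]: "\<And>j. (\<lambda>\<omega>. X \<omega> j) \<in> measurable M (count_space UNIV)"
    and parent_2: "\<And>\<omega>. \<omega> \<in> space M \<Longrightarrow> X \<omega> 2 = 1"
    and cond_prob_parent: "\<And>n i. 3 \<le> n \<Longrightarrow> i \<in> {1..n-1} \<Longrightarrow>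
           AE \<omega> in M. real_cond_exp M (tree_filtration M X (n - 1))
                          (indicator {\<omega> \<in> space M. X \<omega> n = i}) \<omega>
                        = real (deg (tree_edges (X \<omega>) (n - 1)) i) / (2 * (real n - 2))"
begin

abbreviation T :: "nat \<Rightarrow> 'a \<Rightarrow> nat set set" where
  "T n \<omega> \<equiv> tree_edges (X \<omega>) n"

abbreviation F :: "nat \<Rightarrow> 'a measure" where
  "F \<equiv> tree_filtration M X"

abbreviation Z :: "nat \<Rightarrow> 'a \<Rightarrow> real" where
  "Z n \<omega> \<equiv> real (zagreb n (T n \<omega>))"

lemma measurable_tree_edges [measurable]: "T n \<in> measurable M (count_space UNIV)"
proof (induction n)
  case 0
  then show ?case by (simp add: tree_edges_eq_empty)
next
  case (Suc n)
  show ?case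
  proof (cases "n = 0")
    case True
    then show ?thesis by (simp add: tree_edges_eq_empty)
  next
    case False
    have "(\<lambda>\<omega>. insert {X \<omega> (Suc n), Suc n} (T n \<omega>)) \<in> measurable M (count_space UNIV)"
    proof (rule measurable_compose_countable'[where I=UNIV and g="\<lambda>\<omega>. X \<omega> (Suc n)"
          and f="\<lambda>i \<omega>. insert {i, Suc n} (T n \<omega>)"])
      show "(\<lambda>\<omega>. insert {i, Suc n} (T n \<omega>)) \<in> measurable M (count_space UNIV)" for i :: nat
        using measurable_compose[OF Suc.IH, of "insert {i, Suc n}"] by simp
    qed auto
    then show ?thesis
      using False by (simp add: tree_edges_Suc)
  qed
qed

lemma sets_tree_filtration:
  "sets (F m) = sigma_sets (space M) {{\<omega> \<in> space M. T k \<omega> \<in> A} | k A. 1 \<le> k \<and> k \<le> m}"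
  unfolding tree_filtration_def by (rule sets_measure_of) auto

lemma space_tree_filtration [simp]: "space (F m) = space M"
  unfolding tree_filtration_def by (rule space_measure_of) auto

lemma subalgebra_tree_filtration: "subalgebra M (F m)"
proof -
  have "{\<omega> \<in> space M. T k \<omega> \<in> A} \<in> sets M" for k A
    using measurable_sets[OF measurable_tree_edges, of A k] by (simp add: vimage_def Int_def conj_commute)
  then show ?thesis
    unfolding subalgebra_def sets_tree_filtration by (auto intro!: sets.sigma_sets_subset)
qed

lemma sets_tree_filtration_mono: "n \<le> m \<Longrightarrow> sets (F n) \<subseteq> sets (F m)"
  unfolding sets_tree_filtration by (rule sigma_sets_mono') auto

lemma measurable_tree_filtration:
  assumes "1 \<le> k" "k \<le> m" "\<And>E. g E \<in> space N"
  shows "(\<lambda>\<omega>. g (T k \<omega>)) \<in> measurable (F m) N"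
proof (rule measurableI)
  fix B assume "B \<in> sets N"
  have "(\<lambda>\<omega>. g (T k \<omega>)) -` B \<inter> space (F m) = {\<omega> \<in> space M. T k \<omega> \<in> g -` B}"
    by auto
  also have "\<dots> \<in> sets (F m)"
    unfolding sets_tree_filtration by (rule sigma_sets.Basic) (use assms in blast)
  finally show "(\<lambda>\<omega>. g (T k \<omega>)) -` B \<inter> space (F m) \<in> sets (F m)" .
qed (use assms in auto)

lemma cond_prob_parent_Suc:
  assumes "2 \<le> n" "i \<in> {1..n}"
  shows "AE \<omega> in M. real_cond_exp M (F n) (indicator {\<omega> \<in> space M. X \<omega> (Suc n) = i}) \<omega>
                      = real (deg (T n \<omega>) i) / (2 * (real n - 1))"
  using cond_prob_parent[of "Suc n" i] assms by (simp add: algebra_simps)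

text \<open>The hypotheses only describe the conditional law of the parent, so the parent is an earlier
  node only almost surely; this holds because the conditional probabilities of the n earlier nodes
  already sum to 1.\<close>

lemma AE_recursive_tree: "AE \<omega> in M. recursive_tree (X \<omega>) n"
proof (induction n)
  case 0
  show ?case by (simp add: recursive_tree_def)
next
  case (Suc n)
  show ?case
  proof (cases "n \<le> 1")
    case True
    then have "recursive_tree (X \<omega>) (Suc n)" if "\<omega> \<in> space M" for \<omega>
      using parent_2[OF that] unfolding recursive_tree_def by (auto simp: le_Suc_eq numeral_2_eq_2)
    then show ?thesis by (rule AE_I2)
  next
    case False
    have "AE \<omega> in M. \<forall>i\<in>{1..n}. real_cond_exp M (F n)
        (indicator {\<omega> \<in> space M. X \<omega> (Suc n) = i}) \<omega> = real (deg (T n \<omega>) i) / (2 * (real n - 1))"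
      using False by (intro AE_finite_allI cond_prob_parent_Suc) auto
    then have "AE \<omega> in M. (\<Sum>i\<in>{1..n}. real_cond_exp M (F n)
        (indicator {\<omega> \<in> space M. X \<omega> (Suc n) = i}) \<omega>) = 1"
      using Suc.IH
    proof eventually_elim
      case (elim \<omega>)
      then have "(\<Sum>i\<in>{1..n}. real_cond_exp M (F n)
          (indicator {\<omega> \<in> space M. X \<omega> (Suc n) = i}) \<omega>)
          = real (\<Sum>i=1..n. deg (T n \<omega>) i) / (2 * (real n - 1))"
        by (simp add: sum_divide_distrib)
      also have "\<dots> = 1"
        using sum_deg_tree_edges[OF elim(2)] False by (simp add: of_nat_diff)
      finally show ?case .
    qed
    then have "AE \<omega> in M. X \<omega> (Suc n) \<in> {1..n}"
      by (intro AE_mem_if_sum_cond_prob_eq_1[OF subalgebra_tree_filtration]) auto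
    with Suc.IH show ?thesis
      by eventually_elim (rule recursive_tree_SucI)
  qed
qed

lemma borel_measurable_tree_function [measurable]:
  "(\<lambda>\<omega>. g (T n \<omega>) :: real) \<in> borel_measurable M"
  using measurable_compose[OF measurable_tree_edges, of g borel] by simp

lemma integrable_zagreb: "integrable M (Z n)"
  by (rule integrable_const_bound[where B="real n ^ 3"])
     (auto simp flip: of_nat_power intro: zagreb_tree_edges_le)

lemma cond_exp_deg_parent:
  assumes "2 \<le> n"
  shows "AE \<omega> in M. real_cond_exp M (F n) (\<lambda>\<omega>. real (deg (T n \<omega>) (X \<omega> (Suc n)))) \<omega>
                      = Z n \<omega> / (2 * (real n - 1))"
proof -
  interpret finite_measure_subalgebra M "F n"
    by unfold_locales (rule subalgebra_tree_filtration)
  have parent: "AE \<omega> in M. X \<omega> (Suc n) \<in> {1..n}"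
    using AE_recursive_tree[of "Suc n"] by eventually_elim (rule recursive_tree_parent_Suc, use assms in auto)
  have deg_F: "(\<lambda>\<omega>. real (deg (T n \<omega>) i)) \<in> borel_measurable (F n)" for i
    by (rule measurable_tree_filtration) (use assms in auto)
  have "AE \<omega> in M. real_cond_exp M (F n) (\<lambda>\<omega>. real (deg (T n \<omega>) (X \<omega> (Suc n)))) \<omega>
      = (\<Sum>i\<in>{1..n}. real (deg (T n \<omega>) i)
           * real_cond_exp M (F n) (indicator {\<omega> \<in> space M. X \<omega> (Suc n) = i}) \<omega>)"
    using deg_tree_edges_le
    by (intro real_cond_exp_discrete_index[where h="\<lambda>i \<omega>. real (deg (T n \<omega>) i)" and B="real n",
          OF _ parent measurable_parent deg_F]) auto
  moreover have "AE \<omega> in M. \<forall>i\<in>{1..n}. real_cond_exp M (F n)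
      (indicator {\<omega> \<in> space M. X \<omega> (Suc n) = i}) \<omega> = real (deg (T n \<omega>) i) / (2 * (real n - 1))"
    using assms by (intro AE_finite_allI cond_prob_parent_Suc) auto
  ultimately show ?thesis
  proof eventually_elim
    case (elim \<omega>)
    then show ?case
      by (simp add: zagreb_def sum_divide_distrib power2_eq_square)
  qed
qed

lemma cond_exp_zagreb_Suc:
  assumes "2 \<le> n"
  shows "AE \<omega> in M. real_cond_exp M (F n) (Z (Suc n)) \<omega> = real n / (real n - 1) * Z n \<omega> + 2"
proof -
  interpret finite_measure_subalgebra M "F n"
    by unfold_locales (rule subalgebra_tree_filtration)
  define D where "D \<omega> = real (deg (T n \<omega>) (X \<omega> (Suc n)))" for \<omega>
  have [measurable]: "D \<in> borel_measurable M"
    unfolding D_def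
    by (rule measurable_compose_countable'[where I=UNIV and g="\<lambda>\<omega>. X \<omega> (Suc n)"
          and f="\<lambda>i \<omega>. real (deg (T n \<omega>) i)"]) auto
  have integrable_D: "integrable M D"
    by (rule integrable_const_bound[where B="real n"]) (auto simp: D_def deg_tree_edges_le)
  have Z_F: "(\<lambda>\<omega>. Z n \<omega> + 2) \<in> borel_measurable (F n)"
    by (rule measurable_tree_filtration) (use assms in auto)
  have "AE \<omega> in M. Z (Suc n) \<omega> = (Z n \<omega> + 2) + 2 * D \<omega>"
    using AE_recursive_tree[of "Suc n"]
    by eventually_elim (use assms in \<open>simp add: zagreb_tree_edges_Suc D_def\<close>)
  then have "AE \<omega> in M. real_cond_exp M (F n) (Z (Suc n)) \<omega>
      = real_cond_exp M (F n) (\<lambda>\<omega>. (Z n \<omega> + 2) + 2 * D \<omega>) \<omega>"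
    by (rule real_cond_exp_cong) auto
  moreover have "AE \<omega> in M. real_cond_exp M (F n) (\<lambda>\<omega>. (Z n \<omega> + 2) + 2 * D \<omega>) \<omega>
      = real_cond_exp M (F n) (\<lambda>\<omega>. Z n \<omega> + 2) \<omega> + real_cond_exp M (F n) (\<lambda>\<omega>. 2 * D \<omega>) \<omega>"
    using integrable_zagreb integrable_D by (intro real_cond_exp_add) auto
  moreover have "AE \<omega> in M. real_cond_exp M (F n) (\<lambda>\<omega>. Z n \<omega> + 2) \<omega> = Z n \<omega> + 2"
    using integrable_zagreb Z_F by (intro real_cond_exp_F_meas) auto
  moreover have "AE \<omega> in M. real_cond_exp M (F n) (\<lambda>\<omega>. 2 * D \<omega>) \<omega> = 2 * real_cond_exp M (F n) D \<omega>"
    using integrable_D by (rule real_cond_exp_cmult)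
  moreover have "AE \<omega> in M. real_cond_exp M (F n) D \<omega> = Z n \<omega> / (2 * (real n - 1))"
    using cond_exp_deg_parent[OF assms] unfolding D_def .
  ultimately show ?thesis
    by eventually_elim (use assms in \<open>simp add: field_simps\<close>)
qed

definition zagreb_martingale :: "nat \<Rightarrow> 'a \<Rightarrow> real" where
  "zagreb_martingale n \<omega> = 2 / (real n - 1) * Z n \<omega> - 4 * (Digamma (real n) + euler_mascheroni)"

lemma zagreb_martingale_adapted: "1 \<le> n \<Longrightarrow> zagreb_martingale n \<in> borel_measurable (F n)"
  unfolding zagreb_martingale_def[abs_def] by (rule measurable_tree_filtration) auto

lemma integrable_zagreb_martingale: "integrable M (zagreb_martingale n)"
  unfolding zagreb_martingale_def[abs_def] using integrable_zagreb by auto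

lemma cond_exp_zagreb_martingale_Suc:
  assumes "2 \<le> n"
  shows "AE \<omega> in M. real_cond_exp M (F n) (zagreb_martingale (Suc n)) \<omega> = zagreb_martingale n \<omega>"
proof -
  interpret finite_measure_subalgebra M "F n"
    by unfold_locales (rule subalgebra_tree_filtration)
  have Digamma_Suc: "Digamma (1 + real n) = Digamma (real n) + 1 / real n"
    using Digamma_plus1[of "real n"] assms by (simp add: add.commute)
  from real_cond_exp_affine[OF integrable_zagreb[of "Suc n"], where a="2 / (real (Suc n) - 1)"
      and c="4 * (Digamma (real (Suc n)) + euler_mascheroni)"] cond_exp_zagreb_Suc[OF assms]
  show ?thesis
    unfolding zagreb_martingale_def[abs_def]
  proof eventually_elim
    case (elim \<omega>)
    show ?case
      unfolding elim using assms by (simp add: Digamma_Suc field_simps)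
  qed
qed

lemma martingale_zagreb_martingale: "martingale_from 2 M F zagreb_martingale"
  unfolding martingale_from_def
proof (intro conjI allI impI)
  show "subalgebra M (F n)" for n
    by (rule subalgebra_tree_filtration)
  show "sets (F n) \<subseteq> sets (F m)" if "2 \<le> n \<and> n \<le> m" for n m
    using that by (intro sets_tree_filtration_mono) simp
  show "zagreb_martingale n \<in> borel_measurable (F n)" if "2 \<le> n" for n
    using that by (intro zagreb_martingale_adapted) simp
  show "integrable M (zagreb_martingale n)" for n
    by (rule integrable_zagreb_martingale)
  show "AE \<omega> in M. real_cond_exp M (F n) (zagreb_martingale (Suc n)) \<omega> = zagreb_martingale n \<omega>"
    if "2 \<le> n" for n
    using that by (rule cond_exp_zagreb_martingale_Suc)
qed

end

theorem lemma4p2: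
  fixes M :: "'a measure" and X :: "'a \<Rightarrow> nat \<Rightarrow> nat"
  assumes "prob_space M"
    and "\<And>j. (\<lambda>\<omega>. X \<omega> j) \<in> measurable M (count_space UNIV)"
    and "\<And>\<omega>. \<omega> \<in> space M \<Longrightarrow> X \<omega> 2 = 1"
    and "\<And>n i. 3 \<le> n \<Longrightarrow> i \<in> {1..n-1} \<Longrightarrow>
           AE \<omega> in M. real_cond_exp M (tree_filtration M X (n - 1))
                          (indicator {\<omega> \<in> space M. X \<omega> n = i}) \<omega>
                        = real (deg (tree_edges (X \<omega>) (n - 1)) i) / (2 * (real n - 2))"
  shows "martingale_from 2 M (tree_filtration M X)
           (\<lambda>n \<omega>. 2 / (real n - 1) * real (zagreb n (tree_edges (X \<omega>) n))
                  - 4 * (Digamma (real n) + euler_mascheroni))"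
proof -
  interpret plane_oriented_recursive_tree M X
    using assms by (auto simp: plane_oriented_recursive_tree_def plane_oriented_recursive_tree_axioms_def)
  have "(\<lambda>n \<omega>. 2 / (real n - 1) * real (zagreb n (tree_edges (X \<omega>) n))
                  - 4 * (Digamma (real n) + euler_mascheroni)) = zagreb_martingale"
    by (simp add: fun_eq_iff zagreb_martingale_def)
  then show ?thesis
    using martingale_zagreb_martingale by simp
qed

end
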